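(* Let $C$ be a linear subspace of $\mathbb{F}_q^\nu$ endowed with the Hamming metric, with coset leader weight distribution $(\alpha_0,\alpha_1,\dots,\alpha_\nu)$. Then there exist a finite-dimensional vector space $V$ over $\mathbb{F}_q$ and a projective weight $\operatorname{wt}_{\mathcal{F}}$ on $V$ such that $\alpha_i=|\{v\in V:\operatorname{wt}_{\mathcal{F}}(v)=i\}|$ for every $i=0,1,\dots,\nu$.
   Context: The coset leader weight of a coset $y+C$ is $\min\{\operatorname{wt}_H(x):x\in y+C\}$; $\alpha_i$ is the number of cosets of $C$ in $\mathbb{F}_q^\nu$ of coset leader weight $i$. A projective weight on $V$ is $\operatorname{wt}_{\mathcal{F}}(v)=\min(\{|I|:I\subseteq\mathcal{F},v\in\langle I\rangle\}\cup\{\infty\})$ for a set $\mathcal{F}\subset V$ of pairwise linearly independent nonzero vectors. *)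

theory Defs
  imports Main "HOL-Library.Function_Algebras" "HOL-Library.Extended_Nat"
begin

(* Vectors of F_q^n are represented as functions nat => 'a vanishing outside {..<n}. *)
definition vspace :: "nat \<Rightarrow> (nat \<Rightarrow> 'a::field) set" where
  "vspace n = {x. \<forall>k\<ge>n. x k = 0}"

definition vscale :: "'a::field \<Rightarrow> (nat \<Rightarrow> 'a) \<Rightarrow> (nat \<Rightarrow> 'a)" where
  "vscale c x = (\<lambda>k. c * x k)"

definition hamming_wt :: "nat \<Rightarrow> (nat \<Rightarrow> 'a::field) \<Rightarrow> nat" where
  "hamming_wt n x = card {i. i < n \<and> x i \<noteq> 0}"

definition cosets :: "nat \<Rightarrow> (nat \<Rightarrow> 'a::field) set \<Rightarrow> (nat \<Rightarrow> 'a) set set" where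
  "cosets n C = {(\<lambda>c. y + c) ` C | y. y \<in> vspace n}"

definition coset_leader_wt :: "nat \<Rightarrow> (nat \<Rightarrow> 'a::field) set \<Rightarrow> nat" where
  "coset_leader_wt n S = Min (hamming_wt n ` S)"

definition alpha :: "nat \<Rightarrow> (nat \<Rightarrow> 'a::field) set \<Rightarrow> nat \<Rightarrow> nat" where
  "alpha n C i = card {S \<in> cosets n C. coset_leader_wt n S = i}"

definition pairwise_indep :: "(nat \<Rightarrow> 'a::field) set \<Rightarrow> bool" where
  "pairwise_indep F \<longleftrightarrow> 0 \<notin> F \<and>
     (\<forall>f\<in>F. \<forall>g\<in>F. f \<noteq> g \<longrightarrow> \<not> module.dependent vscale {f, g})"

definition proj_wt :: "(nat \<Rightarrow> 'a::field) set \<Rightarrow> (nat \<Rightarrow> 'a) \<Rightarrow> enat" where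
  "proj_wt F v = (INF I \<in> {I. I \<subseteq> F \<and> finite I \<and> v \<in> module.span vscale I}. enat (card I))"

end

theory Submission
  imports Defs
begin

(* Choose a linear surjection phi from F_q^nu onto some F_q^m with kernel C (a parity-check
   map); then y + C |-> phi y is a bijection between the cosets of C and F_q^m.  Let F contain
   one representative of each projective point among the nonzero columns phi e_k.  A vector
   phi y lies in the span of I \<subseteq> F exactly when some x in y + C is supported on columns
   represented by I, so wt_F (phi y) is the minimal Hamming weight in y + C. *)

interpretation V: vector_space vscale
  by unfold_locales (auto simp: vscale_def fun_eq_iff algebra_simps)

interpretation VP: vector_space_pair vscale vscale
  by unfold_locales

lemma vscale_apply: "vscale c x k = c * x k"
  by (simp add: vscale_def)

lemma sum_fun_apply: "sum f A k = (\<Sum>a\<in>A. f a k)"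
  by (induction A rule: infinite_finite_induct) auto

definition unit_vec :: "nat \<Rightarrow> nat \<Rightarrow> 'a::field" where
  "unit_vec i = (\<lambda>k. if k = i then 1 else 0)"

lemma unit_vec_in_vspace: "i < n \<Longrightarrow> unit_vec i \<in> vspace n"
  by (simp add: unit_vec_def vspace_def)

lemma subspace_vspace: "V.subspace (vspace n)"
  by (auto simp: V.subspace_def vspace_def vscale_apply)

lemma in_span_unit_vec_support:
  assumes "x \<in> vspace n"
  shows "x \<in> V.span (unit_vec ` {k. k < n \<and> x k \<noteq> 0})"
proof -
  have "x = (\<Sum>k<n. vscale (x k) (unit_vec k))"
  proof
    fix j
    have "(\<Sum>k<n. vscale (x k) (unit_vec k)) j = (\<Sum>k<n. if j = k then x k else 0)"
      unfolding sum_fun_apply by (rule sum.cong) (auto simp: unit_vec_def vscale_apply)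
    then show "x j = (\<Sum>k<n. vscale (x k) (unit_vec k)) j"
      using assms by (simp add: vspace_def)
  qed
  also have "\<dots> \<in> V.span (unit_vec ` {k. k < n \<and> x k \<noteq> 0})"
  proof (rule V.span_sum)
    fix k assume "k \<in> {..<n}"
    then show "vscale (x k) (unit_vec k) \<in> V.span (unit_vec ` {k. k < n \<and> x k \<noteq> 0})"
      by (cases "x k = 0") (auto intro: V.span_scale V.span_base V.span_zero)
  qed
  finally show ?thesis .
qed

lemma support_subset_if_in_span_unit_vec:
  assumes "x \<in> V.span (unit_vec ` K)"
  shows "{k. x k \<noteq> 0} \<subseteq> K"
proof -
  have "V.span (unit_vec ` K) \<subseteq> {x. \<forall>k\<in>-K. x k = 0}"
    by (rule V.span_minimal) (auto simp: unit_vec_def V.subspace_def vscale_apply)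
  then show ?thesis using assms by blast
qed

lemma vspace_eq_span_unit_vec: "vspace n = V.span (unit_vec ` {..<n})"
proof
  show "vspace n \<subseteq> V.span (unit_vec ` {..<n})"
  proof
    fix x assume "x \<in> vspace n"
    moreover have "V.span (unit_vec ` {k. k < n \<and> x k \<noteq> 0}) \<subseteq> V.span (unit_vec ` {..<n})"
      by (intro V.span_mono image_mono) auto
    ultimately show "x \<in> V.span (unit_vec ` {..<n})"
      using in_span_unit_vec_support by blast
  qed
  show "V.span (unit_vec ` {..<n}) \<subseteq> vspace n"
    by (intro V.span_minimal subspace_vspace) (auto intro: unit_vec_in_vspace)
qed

lemma finite_vspace: "finite (vspace n :: (nat \<Rightarrow> 'a::{field,finite}) set)"
proof -
  have "vspace n = {f :: nat \<Rightarrow> 'a. \<forall>k. (k \<in> {..<n} \<longrightarrow> f k \<in> UNIV) \<and> (k \<notin> {..<n} \<longrightarrow> f k = 0)}"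
    by (auto simp: vspace_def)
  then show ?thesis
    using finite_set_of_finite_funs[of "{..<n}" "UNIV :: 'a set" 0] by simp
qed

lemma dependent_pair_iff:
  assumes "f \<noteq> 0" "a \<noteq> f"
  shows "V.dependent {a, f} \<longleftrightarrow> a \<in> V.span {f}"
  using assms V.independent_insert[of a "{f}"] by auto

lemma pairwise_indep_insert:
  assumes F: "pairwise_indep F" and "a \<noteq> 0" and a: "\<forall>f\<in>F. a \<notin> V.span {f}"
  shows "pairwise_indep (insert a F)"
proof -
  have "\<not> V.dependent {a, f}" if "f \<in> F" "a \<noteq> f" for f
  proof -
    have "f \<noteq> 0" using F \<open>f \<in> F\<close> by (auto simp: pairwise_indep_def)
    then show ?thesis using that a dependent_pair_iff by blast
  qed
  then show ?thesis
    using assms unfolding pairwise_indep_def by (metis insert_commute insert_iff)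
qed

lemma exists_pairwise_indep_representatives:
  assumes "finite A"
  shows "\<exists>F\<subseteq>A. pairwise_indep F \<and> (\<forall>a\<in>A. a \<noteq> 0 \<longrightarrow> (\<exists>f\<in>F. a \<in> V.span {f}))"
  using assms
proof (induction A rule: finite_induct)
  case empty
  show ?case by (auto simp: pairwise_indep_def)
next
  case (insert a A)
  then obtain F where F: "F \<subseteq> A" "pairwise_indep F" "\<forall>a\<in>A. a \<noteq> 0 \<longrightarrow> (\<exists>f\<in>F. a \<in> V.span {f})"
    by blast
  show ?case
  proof (cases "a = 0 \<or> (\<exists>f\<in>F. a \<in> V.span {f})")
    case True
    with F show ?thesis by blast
  next
    case False
    then have "pairwise_indep (insert a F)"
      using F(2) by (auto intro: pairwise_indep_insert)
    with F show ?thesis by (intro exI[of _ "insert a F"]) (blast intro: V.span_base)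
  qed
qed

definition quotient_coords ::
    "(nat \<Rightarrow> 'a::field) set \<Rightarrow> (nat \<Rightarrow> 'a) set \<Rightarrow> ((nat \<Rightarrow> 'a) \<Rightarrow> nat) \<Rightarrow> (nat \<Rightarrow> 'a) \<Rightarrow> nat \<Rightarrow> 'a"
  where "quotient_coords B BC h = VP.construct B (\<lambda>b. if b \<in> BC then 0 else unit_vec (h b))"

lemma linear_quotient_coords:
  "V.independent B \<Longrightarrow> Vector_Spaces.linear vscale vscale (quotient_coords B BC h)"
  unfolding quotient_coords_def by (rule VP.linear_construct)

lemma quotient_coords_basis:
  "V.independent B \<Longrightarrow> b \<in> B \<Longrightarrow> quotient_coords B BC h b = (if b \<in> BC then 0 else unit_vec (h b))"
  unfolding quotient_coords_def by (rule VP.construct_basis)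

lemma quotient_coords_image:
  assumes B: "V.independent B" and h: "h ` (B - BC) = {..<m}"
  shows "quotient_coords B BC h ` V.span B = vspace m"
proof -
  have image_sub: "quotient_coords B BC h ` B \<subseteq> V.span (unit_vec ` {..<m})"
    using h by (auto simp: quotient_coords_basis[OF B] V.span_zero intro: V.span_base)
  have unit_vec_sub: "unit_vec ` {..<m} \<subseteq> quotient_coords B BC h ` B"
  proof
    fix e :: "nat \<Rightarrow> 'a" assume "e \<in> unit_vec ` {..<m}"
    then obtain k where "k < m" and e: "e = unit_vec k" by blast
    then have "k \<in> h ` (B - BC)" using h by simp
    then obtain b where "k = h b" "b \<in> B - BC" by (rule imageE)
    then show "e \<in> quotient_coords B BC h ` B"
      using e by (intro image_eqI[of _ _ b]) (auto simp: quotient_coords_basis[OF B])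
  qed
  have "V.span (quotient_coords B BC h ` B) = V.span (unit_vec ` {..<m})"
    unfolding V.span_eq using order_trans[OF unit_vec_sub V.span_superset] by (intro conjI image_sub)
  then show ?thesis
    by (simp add: VP.linear_span_image[OF linear_quotient_coords[OF B]] vspace_eq_span_unit_vec)
qed

lemma quotient_coords_eq_0_iff:
  assumes B: "V.independent B" "finite B" and "BC \<subseteq> B" and h: "inj_on h (B - BC)"
    and x: "x \<in> V.span B"
  shows "quotient_coords B BC h x = 0 \<longleftrightarrow> x \<in> V.span BC"
proof
  let ?\<phi> = "quotient_coords B BC h"
  have lin: "Vector_Spaces.linear vscale vscale ?\<phi>" using linear_quotient_coords[OF B(1)] .
  assume \<phi>x: "?\<phi> x = 0"
  obtain u where u: "x = (\<Sum>b\<in>B. vscale (u b) b)"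
    using x V.span_finite[OF B(2)] by auto
  have "u b0 = 0" if b0: "b0 \<in> B - BC" for b0
  proof -
    have "0 = ?\<phi> x (h b0)" using \<phi>x by simp
    also have "\<dots> = (\<Sum>b\<in>B. u b * ?\<phi> b (h b0))"
      by (simp add: u VP.linear_sum[OF lin] VP.linear_scale[OF lin] sum_fun_apply vscale_apply)
    also have "\<dots> = (\<Sum>b\<in>B. if b = b0 then u b0 else 0)"
      using b0 h by (intro sum.cong) (auto simp: quotient_coords_basis[OF B(1)] unit_vec_def inj_on_def)
    also have "\<dots> = u b0" using b0 B(2) by simp
    finally show ?thesis by simp
  qed
  then show "x \<in> V.span BC"
    unfolding u by (intro V.span_sum) (metis DiffI V.scale_zero_left V.span_base V.span_scale V.span_zero)
next
  assume "x \<in> V.span BC"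
  moreover have "quotient_coords B BC h b = 0" if "b \<in> BC" for b
    using that \<open>BC \<subseteq> B\<close> by (auto simp: quotient_coords_basis[OF B(1)])
  ultimately show "quotient_coords B BC h x = 0"
    using VP.linear_eq_0_on_span[OF linear_quotient_coords[OF B(1)]] by blast
qed

lemma exists_linear_onto_vspace_with_kernel:
  assumes C: "C \<subseteq> vspace n" "V.subspace C"
  obtains m and \<phi> :: "(nat \<Rightarrow> 'a::field) \<Rightarrow> nat \<Rightarrow> 'a"
  where "Vector_Spaces.linear vscale vscale \<phi>" "\<phi> ` vspace n = vspace m"
    "C = {x \<in> vspace n. \<phi> x = 0}"
proof -
  obtain BC where BC: "BC \<subseteq> C" "V.independent BC" "C \<subseteq> V.span BC"
    by (rule V.maximal_independent_subset_extend[OF empty_subsetI V.independent_empty])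
  obtain B where B: "BC \<subseteq> B" "B \<subseteq> vspace n" "V.independent B" "vspace n \<subseteq> V.span B"
    by (rule V.maximal_independent_subset_extend[of BC "vspace n"]) (use BC C in auto)
  have "V.span BC = C" using V.span_subspace[OF BC(1,3) C(2)] .
  have "V.span B = vspace n"
    using B(2,4) V.span_minimal[OF B(2) subspace_vspace] by blast
  have "finite B"
    using V.independent_span_bound[of "unit_vec ` {..<n}" B] B(2,3) vspace_eq_span_unit_vec by auto
  then obtain h where h: "bij_betw h (B - BC) {..<card (B - BC)}"
    using ex_bij_betw_finite_nat[of "B - BC"] by (auto simp: atLeast0LessThan)
  show ?thesis
  proof
    show "Vector_Spaces.linear vscale vscale (quotient_coords B BC h)"
      using B(3) by (rule linear_quotient_coords)
    show "quotient_coords B BC h ` vspace n = vspace (card (B - BC))"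
      using quotient_coords_image[OF B(3)] h \<open>V.span B = vspace n\<close> by (simp add: bij_betw_def)
    show "C = {x \<in> vspace n. quotient_coords B BC h x = 0}"
      using quotient_coords_eq_0_iff[OF B(3) \<open>finite B\<close> B(1)] h \<open>V.span BC = C\<close> \<open>V.span B = vspace n\<close> C(1)
      by (auto simp: bij_betw_def)
  qed
qed

lemma coset_eq_fiber:
  fixes \<phi> :: "(nat \<Rightarrow> 'a::field) \<Rightarrow> nat \<Rightarrow> 'a"
  assumes lin: "Vector_Spaces.linear vscale vscale \<phi>" and C: "C = {x \<in> vspace n. \<phi> x = 0}"
    and y: "y \<in> vspace n"
  shows "(\<lambda>c. y + c) ` C = {x \<in> vspace n. \<phi> x = \<phi> y}"
proof (intro equalityI subsetI)
  fix x assume "x \<in> (\<lambda>c. y + c) ` C"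
  then show "x \<in> {x \<in> vspace n. \<phi> x = \<phi> y}"
    using y C VP.linear_add[OF lin] V.subspace_add[OF subspace_vspace] by auto
next
  fix x assume x: "x \<in> {x \<in> vspace n. \<phi> x = \<phi> y}"
  then have "x - y \<in> C"
    using y C VP.linear_diff[OF lin] V.subspace_diff[OF subspace_vspace] by auto
  then show "x \<in> (\<lambda>c. y + c) ` C" by (intro image_eqI[of _ _ "x - y"]) auto
qed

lemma alpha_eq_card_fibers:
  fixes \<phi> :: "(nat \<Rightarrow> 'a::field) \<Rightarrow> nat \<Rightarrow> 'a"
  assumes lin: "Vector_Spaces.linear vscale vscale \<phi>" and onto: "\<phi> ` vspace n = vspace m"
    and C: "C = {x \<in> vspace n. \<phi> x = 0}"
  shows "alpha n C i = card {v \<in> vspace m. coset_leader_wt n {x \<in> vspace n. \<phi> x = v} = i}"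
proof -
  define fiber where "fiber v = {x \<in> vspace n. \<phi> x = v}" for v
  have "cosets n C = (\<lambda>y. (\<lambda>c. y + c) ` C) ` vspace n"
    by (auto simp: cosets_def)
  also have "\<dots> = (\<lambda>y. fiber (\<phi> y)) ` vspace n"
    by (intro image_cong) (simp_all add: coset_eq_fiber[OF lin C] fiber_def)
  also have "\<dots> = fiber ` vspace m"
    by (simp add: image_image flip: onto)
  finally have "cosets n C = fiber ` vspace m" .
  moreover have "inj_on fiber (vspace m)"
  proof
    fix v v' assume v: "v \<in> vspace m" and eq: "fiber v = fiber v'"
    have "v \<in> \<phi> ` vspace n" using v onto by simp
    then obtain y where "v = \<phi> y" "y \<in> vspace n" by (rule imageE)
    then show "v = v'" using eq unfolding fiber_def by blast
  qed
  moreover have "{S \<in> fiber ` vspace m. coset_leader_wt n S = i} =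
      fiber ` {v \<in> vspace m. coset_leader_wt n (fiber v) = i}"
    by auto
  ultimately show ?thesis
    unfolding alpha_def fiber_def [symmetric]
    by (simp add: card_image inj_on_subset)
qed

lemma exists_preimage_hamming_wt_le_card:
  fixes \<phi> :: "(nat \<Rightarrow> 'a::field) \<Rightarrow> nat \<Rightarrow> 'a"
  assumes lin: "Vector_Spaces.linear vscale vscale \<phi>" and F: "F \<subseteq> \<phi> ` unit_vec ` {..<n}"
    and I: "I \<subseteq> F" "finite I" and v: "v \<in> V.span I"
  shows "\<exists>x\<in>vspace n. \<phi> x = v \<and> hamming_wt n x \<le> card I"
proof -
  obtain K where K: "K \<subseteq> {..<n}" "inj_on (\<phi> \<circ> unit_vec) K" "I = (\<phi> \<circ> unit_vec) ` K"
    using I(1) F subset_image_inj[of I "\<phi> \<circ> unit_vec" "{..<n}"] by (auto simp: image_comp)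
  have "I = \<phi> ` unit_vec ` K" using K(3) by (simp add: image_comp)
  then have "v \<in> \<phi> ` V.span (unit_vec ` K)"
    using v VP.linear_span_image[OF lin] by simp
  then obtain x where x: "x \<in> V.span (unit_vec ` K)" "\<phi> x = v" by blast
  have "V.span (unit_vec ` K) \<subseteq> vspace n"
    using K(1) unit_vec_in_vspace by (intro V.span_minimal subspace_vspace) auto
  with x(1) have "x \<in> vspace n" by blast
  moreover have "hamming_wt n x \<le> card K"
    using support_subset_if_in_span_unit_vec[OF x(1)] K(1) finite_subset[OF K(1)]
    unfolding hamming_wt_def by (intro card_mono) auto
  moreover have "card K = card I"
    using card_image[OF K(2)] K(3) by simp
  ultimately show ?thesis using x(2) by auto
qed

lemma exists_span_card_le_hamming_wt:
  fixes \<phi> :: "(nat \<Rightarrow> 'a::field) \<Rightarrow> nat \<Rightarrow> 'a"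
  assumes lin: "Vector_Spaces.linear vscale vscale \<phi>"
    and F: "\<forall>k<n. \<phi> (unit_vec k) \<noteq> 0 \<longrightarrow> (\<exists>f\<in>F. \<phi> (unit_vec k) \<in> V.span {f})"
    and x: "x \<in> vspace n"
  shows "\<exists>I\<subseteq>F. finite I \<and> card I \<le> hamming_wt n x \<and> \<phi> x \<in> V.span I"
proof -
  define K where "K = {k. k < n \<and> x k \<noteq> 0}"
  define K' where "K' = {k \<in> K. \<phi> (unit_vec k) \<noteq> 0}"
  have "\<forall>k\<in>K'. \<exists>f. f \<in> F \<and> \<phi> (unit_vec k) \<in> V.span {f}"
    using F by (auto simp: K'_def K_def)
  then obtain rep where rep: "\<And>k. k \<in> K' \<Longrightarrow> rep k \<in> F \<and> \<phi> (unit_vec k) \<in> V.span {rep k}"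
    by metis
  have "finite K'" by (simp add: K'_def K_def)
  have "card (rep ` K') \<le> hamming_wt n x"
    using card_image_le[OF \<open>finite K'\<close>, of rep] card_mono[of K K']
    unfolding hamming_wt_def K_def K'_def by fastforce
  moreover have "\<phi> ` unit_vec ` K \<subseteq> V.span (rep ` K')"
  proof
    fix w assume "w \<in> \<phi> ` unit_vec ` K"
    then obtain k where k: "k \<in> K" "w = \<phi> (unit_vec k)" by blast
    show "w \<in> V.span (rep ` K')"
    proof (cases "w = 0")
      case False
      then have "k \<in> K'" using k by (simp add: K'_def)
      then show ?thesis
        using rep k(2) V.span_mono[of "{rep k}" "rep ` K'"] by blast
    qed (simp add: V.span_zero)
  qed
  then have "V.span (\<phi> ` unit_vec ` K) \<subseteq> V.span (rep ` K')"
    by (simp add: V.span_minimal)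
  then have "\<phi> x \<in> V.span (rep ` K')"
    using in_span_unit_vec_support[OF x] VP.linear_span_image[OF lin] by (auto simp: K_def)
  ultimately show ?thesis
    using rep \<open>finite K'\<close> by (intro exI[of _ "rep ` K'"]) auto
qed

lemma proj_wt_eq_coset_leader_wt:
  fixes \<phi> :: "(nat \<Rightarrow> 'a::{field,finite}) \<Rightarrow> nat \<Rightarrow> 'a"
  assumes lin: "Vector_Spaces.linear vscale vscale \<phi>"
    and F_sub: "F \<subseteq> \<phi> ` unit_vec ` {..<n}"
    and F_covers: "\<forall>k<n. \<phi> (unit_vec k) \<noteq> 0 \<longrightarrow> (\<exists>f\<in>F. \<phi> (unit_vec k) \<in> V.span {f})"
    and y: "y \<in> vspace n"
  shows "proj_wt F (\<phi> y) = enat (coset_leader_wt n {x \<in> vspace n. \<phi> x = \<phi> y})"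
proof -
  define S where "S = {x \<in> vspace n. \<phi> x = \<phi> y}"
  have "finite S"
    unfolding S_def by (rule finite_subset[OF _ finite_vspace]) auto
  moreover have "y \<in> S" using y by (simp add: S_def)
  ultimately have S: "finite S" "S \<noteq> {}" by auto
  have "coset_leader_wt n S \<in> hamming_wt n ` S"
    unfolding coset_leader_wt_def using S by (intro Min_in) auto
  then obtain x0 where x0: "coset_leader_wt n S = hamming_wt n x0" "x0 \<in> S"
    by (rule imageE)
  show ?thesis
    unfolding proj_wt_def S_def [symmetric]
  proof (rule antisym)
    obtain I where "I \<subseteq> F" "finite I" "card I \<le> hamming_wt n x0" "\<phi> y \<in> V.span I"
      using exists_span_card_le_hamming_wt[OF lin F_covers, of x0] x0(2) by (auto simp: S_def)
    then show "(INF I\<in>{I. I \<subseteq> F \<and> finite I \<and> \<phi> y \<in> V.span I}. enat (card I)) \<le> enat (coset_leader_wt n S)"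
      using x0(1) by (intro INF_lower2[of I]) auto
  next
    show "enat (coset_leader_wt n S) \<le> (INF I\<in>{I. I \<subseteq> F \<and> finite I \<and> \<phi> y \<in> V.span I}. enat (card I))"
    proof (rule INF_greatest)
      fix I assume "I \<in> {I. I \<subseteq> F \<and> finite I \<and> \<phi> y \<in> V.span I}"
      then obtain x where "x \<in> S" "hamming_wt n x \<le> card I"
        using exists_preimage_hamming_wt_le_card[OF lin F_sub, of I "\<phi> y"] by (auto simp: S_def)
      moreover have "coset_leader_wt n S \<le> hamming_wt n x"
        unfolding coset_leader_wt_def using S(1) \<open>x \<in> S\<close> by (intro Min_le) auto
      ultimately show "enat (coset_leader_wt n S) \<le> enat (card I)" by simp
    qed
  qed
qed

theorem proposition6p3:
  fixes C :: "(nat \<Rightarrow> 'a::{field,finite}) set" and \<nu> :: nat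
  assumes "C \<subseteq> vspace \<nu>" and "module.subspace vscale C"
  shows "\<exists>m. \<exists>F :: (nat \<Rightarrow> 'a) set. F \<subseteq> vspace m \<and> pairwise_indep F \<and>
           (\<forall>i\<le>\<nu>. alpha \<nu> C i = card {v \<in> vspace m. proj_wt F v = enat i})"
proof -
  obtain m \<phi> where lin: "Vector_Spaces.linear vscale vscale \<phi>" and onto: "\<phi> ` vspace \<nu> = vspace m"
    and C: "C = {x \<in> vspace \<nu>. \<phi> x = 0}"
    using exists_linear_onto_vspace_with_kernel[OF assms] by blast
  obtain F where F_sub: "F \<subseteq> \<phi> ` unit_vec ` {..<\<nu>}" and F_indep: "pairwise_indep F"
    and "\<forall>a\<in>\<phi> ` unit_vec ` {..<\<nu>}. a \<noteq> 0 \<longrightarrow> (\<exists>f\<in>F. a \<in> V.span {f})"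
    using exists_pairwise_indep_representatives[of "\<phi> ` unit_vec ` {..<\<nu>}"] by auto
  then have F_covers: "\<forall>k<\<nu>. \<phi> (unit_vec k) \<noteq> 0 \<longrightarrow> (\<exists>f\<in>F. \<phi> (unit_vec k) \<in> V.span {f})"
    by simp
  have "\<phi> ` unit_vec ` {..<\<nu>} \<subseteq> vspace m"
    unfolding onto [symmetric] by (intro image_mono) (auto intro: unit_vec_in_vspace)
  with F_sub have F_vspace: "F \<subseteq> vspace m" by (rule subset_trans)
  have wt: "proj_wt F v = enat (coset_leader_wt \<nu> {x \<in> vspace \<nu>. \<phi> x = v})"
    if "v \<in> vspace m" for v
  proof -
    have "v \<in> \<phi> ` vspace \<nu>" using that onto by simp
    then obtain y where "v = \<phi> y" "y \<in> vspace \<nu>" by (rule imageE)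
    then show ?thesis using proj_wt_eq_coset_leader_wt[OF lin F_sub F_covers] by simp
  qed
  have "alpha \<nu> C i = card {v \<in> vspace m. proj_wt F v = enat i}" for i
    unfolding alpha_eq_card_fibers[OF lin onto C]
    by (intro arg_cong[where f = card] Collect_cong) (auto simp: wt)
  with F_vspace F_indep show ?thesis by blast
qed

end
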